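(* Let $\Phi=\forall u_1\ldots\forall u_n\exists e_1(D_1)\ldots\exists e_m(D_m).\varphi$ be a DQBF. If Algorithm 1 (as described in the context), run on $\Phi$, returns FALSE, then $\Phi$ is false; this holds for every admissible choice made during the run.
   Context: For a set $V$ of variables, $[V]$ is the set of assignments $V\to\{\textsc{true},\textsc{false}\}$; assignments are identified with terms of the literals they make true, $\neg\sigma$ is the clause of the negations of these literals, and $\sigma|_W$ denotes restriction. A DQBF is $\Phi=\forall u_1\ldots\forall u_n\exists e_1(D_1)\ldots\exists e_m(D_m).\varphi$ with pairwise distinct variables, $U=\{u_i\}$, $E=\{e_j\}$, dependency sets $D(e_j)=D_j\subseteq U$, $\varphi$ a CNF over $U\cup E$; a model is a family $(f_e)_{e\in E}$, $f_e:[D(e)]\to\{\textsc{true},\textsc{false}\}$, such that for all $\sigma\in[U]$ the assignment $\sigma$ together with $e\mapsto f_e(\sigma|_{D(e)})$ satisfies $\varphi$; $\Phi$ is true iff it has a model, false otherwise. A definition of a variable $x$ by a set $X$ in a formula $\chi$ is a formula $\psi$ with $\mathit{var}(\psi)\subseteq X$ such that every satisfying assignment $\lambda$ of $\chi$ has $\lambda(x)=\psi[\lambda]$. Arbiter variables $e^\sigma$ ($e\in E$, $\sigma\in[D(e)]$) are fresh variables. Algorithm 1. Phase 1: set $A=\emptyset$, $\varphi_A=\emptyset$, $\psi_{\mathit{Def}}=$ empty conjunction. For $i=1,\dots,m$: while $e_i$ has no definition by $A\cup D_i$ in $\varphi\wedge\varphi_A$, choose $\xi\in[D_i\cup A]$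 such that both $\varphi\wedge\varphi_A\wedge\xi\wedge e_i$ and $\varphi\wedge\varphi_A\wedge\xi\wedge\neg e_i$ are satisfiable, let $\sigma=\xi|_{D_i}$, add $e_i^\sigma$ to $A$ and the clauses $(e_i^\sigma\vee\neg\sigma\vee\neg e_i)$, $(\neg e_i^\sigma\vee\neg\sigma\vee e_i)$ to $\varphi_A$. Then choose a definition $\psi^i$ of $e_i$ by $A\cup D_i$ in $\varphi\wedge\varphi_A$ and conjoin $(e_i\leftrightarrow\psi^i)$ to $\psi_{\mathit{Def}}$. Phase 2: let $\tau\in[A]$ set all arbiter variables true, $\mathcal{C}=\emptyset$. Repeat: if $\neg\varphi\wedge\psi_{\mathit{Def}}\wedge\tau$ is unsatisfiable, return TRUE; otherwise choose a satisfying assignment $\sigma$ of it, choose a subset $\rho$ of the literals of $\tau\wedge\sigma|_U$ with $\varphi\wedge\varphi_A\wedge\rho$ unsatisfiable, add the clause $\neg(\rho|_A)$ to $\mathcal{C}$; if $\mathcal{C}$ is satisfiable, let $\tau\in[A]$ satisfy $\mathcal{C}$ and repeat, else return FALSE. *)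

theory Defs
  imports Main
begin

type_synonym 'x lit = "'x \<times> bool"
type_synonym 'x clause = "'x lit set"
type_synonym 'x cnf = "'x clause set"

definition lit_sat :: "('x \<Rightarrow> bool) \<Rightarrow> 'x lit \<Rightarrow> bool" where
  "lit_sat lam l \<longleftrightarrow> lam (fst l) = snd l"

definition clause_sat :: "('x \<Rightarrow> bool) \<Rightarrow> 'x clause \<Rightarrow> bool" where
  "clause_sat lam c \<longleftrightarrow> (\<exists>l\<in>c. lit_sat lam l)"

definition cnf_sat :: "('x \<Rightarrow> bool) \<Rightarrow> 'x cnf \<Rightarrow> bool" where
  "cnf_sat lam F \<longleftrightarrow> (\<forall>c\<in>F. clause_sat lam c)"

definition cnf_vars :: "'x cnf \<Rightarrow> 'x set" where
  "cnf_vars F = {fst l |l c. c \<in> F \<and> l \<in> c}"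

definition agree_on :: "'x set \<Rightarrow> ('x \<Rightarrow> bool) \<Rightarrow> ('x \<Rightarrow> bool) \<Rightarrow> bool" where
  "agree_on X lam lam' \<longleftrightarrow> (\<forall>x\<in>X. lam x = lam' x)"

text \<open>Propositional formulas are represented semantically, as Boolean functions of
  assignments; "var(psi) \<subseteq> X" becomes "psi depends only on the variables in X".\<close>
definition depends_only :: "(('x \<Rightarrow> bool) \<Rightarrow> bool) \<Rightarrow> 'x set \<Rightarrow> bool" where
  "depends_only psi X \<longleftrightarrow> (\<forall>lam lam'. agree_on X lam lam' \<longrightarrow> psi lam = psi lam')"

definition is_definition :: "(('x \<Rightarrow> bool) \<Rightarrow> bool) \<Rightarrow> 'x \<Rightarrow> 'x set \<Rightarrow> (('x \<Rightarrow> bool) \<Rightarrow> bool) \<Rightarrow> bool" where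
  "is_definition psi x X chi \<longleftrightarrow> depends_only psi X \<and> (\<forall>lam. chi lam \<longrightarrow> lam x = psi lam)"

definition has_definition :: "'x \<Rightarrow> 'x set \<Rightarrow> (('x \<Rightarrow> bool) \<Rightarrow> bool) \<Rightarrow> bool" where
  "has_definition x X chi \<longleftrightarrow> (\<exists>psi. is_definition psi x X chi)"

text \<open>A DQBF is given by the list us of universal variables, the list es of existential
  variables (in the order e_1..e_m), dependency sets D e, and a CNF phi over us @ es.
  Assignments in [V] for a set V of variables are represented by the subset of V
  of variables set true.\<close>

definition dqbf_wf :: "'v list \<Rightarrow> 'v list \<Rightarrow> ('v \<Rightarrow> 'v set) \<Rightarrow> 'v cnf \<Rightarrow> bool" where
  "dqbf_wf us es D phi \<longleftrightarrow> distinct (us @ es) \<and> (\<forall>e\<in>set es. D e \<subseteq> set us)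
     \<and> finite phi \<and> (\<forall>c\<in>phi. finite c) \<and> cnf_vars phi \<subseteq> set us \<union> set es"

text \<open>A model: f e S is the value of f_e on the assignment S \<subseteq> D e.\<close>
definition is_model :: "'v list \<Rightarrow> 'v list \<Rightarrow> ('v \<Rightarrow> 'v set) \<Rightarrow> 'v cnf \<Rightarrow> ('v \<Rightarrow> 'v set \<Rightarrow> bool) \<Rightarrow> bool" where
  "is_model us es D phi f \<longleftrightarrow>
     (\<forall>S. S \<subseteq> set us \<longrightarrow>
        cnf_sat (\<lambda>x. if x \<in> set us then x \<in> S else f x (S \<inter> D x)) phi)"

definition dqbf_true :: "'v list \<Rightarrow> 'v list \<Rightarrow> ('v \<Rightarrow> 'v set) \<Rightarrow> 'v cnf \<Rightarrow> bool" where
  "dqbf_true us es D phi \<longleftrightarrow> (\<exists>f. is_model us es D phi f)"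

text \<open>Arb e S is the arbiter variable e^S for S \<subseteq> D e (S the set of true variables).\<close>
datatype 'v avar = Orig 'v | Arb 'v "'v set"

definition lift_cnf :: "'v cnf \<Rightarrow> 'v avar cnf" where
  "lift_cnf phi = (\<lambda>c. (\<lambda>(x, b). (Orig x, b)) ` c) ` phi"

text \<open>The clause \<not>S for an assignment S of D: negations of the literals made true.\<close>
definition neg_assign :: "'v set \<Rightarrow> 'v set \<Rightarrow> 'v avar clause" where
  "neg_assign Dv S = (\<lambda>u. (Orig u, u \<notin> S)) ` Dv"

definition arbiter_clauses :: "('v \<Rightarrow> 'v set) \<Rightarrow> 'v \<Rightarrow> 'v set \<Rightarrow> 'v avar cnf" where
  "arbiter_clauses D e S =
     {{(Arb e S, True), (Orig e, False)} \<union> neg_assign (D e) S,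
      {(Arb e S, False), (Orig e, True)} \<union> neg_assign (D e) S}"

definition arbvars :: "('v \<times> 'v set) set \<Rightarrow> 'v avar set" where
  "arbvars A = (\<lambda>(e, S). Arb e S) ` A"

definition phi_A :: "('v \<Rightarrow> 'v set) \<Rightarrow> ('v \<times> 'v set) set \<Rightarrow> 'v avar cnf" where
  "phi_A D A = (\<Union>(e, S)\<in>A. arbiter_clauses D e S)"

definition base :: "('v \<Rightarrow> 'v set) \<Rightarrow> 'v cnf \<Rightarrow> ('v \<times> 'v set) set \<Rightarrow> ('v avar \<Rightarrow> bool) \<Rightarrow> bool" where
  "base D phi A lam \<longleftrightarrow> cnf_sat lam (lift_cnf phi) \<and> cnf_sat lam (phi_A D A)"

text \<open>phase1 i A ds: a reachable state of Phase 1 in which e_1..e_i have been processed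
  (ds!j is the chosen definition psi^(j+1)), and A is the current set of arbiters.
  Arbiter steps for e_(i+1) happen while e_(i+1) has no definition; the loop for e_(i+1)
  exits when a definition is chosen.\<close>
inductive phase1 :: "'v list \<Rightarrow> ('v \<Rightarrow> 'v set) \<Rightarrow> 'v cnf \<Rightarrow> nat \<Rightarrow> ('v \<times> 'v set) set
    \<Rightarrow> (('v avar \<Rightarrow> bool) \<Rightarrow> bool) list \<Rightarrow> bool"
  for es D phi where
  init: "phase1 es D phi 0 {} []"
| arbiter: "\<lbrakk> phase1 es D phi i A ds; i < length es;
     \<not> has_definition (Orig (es ! i)) (Orig ` D (es ! i) \<union> arbvars A) (base D phi A);
     \<exists>lam. base D phi A lam \<and> agree_on (Orig ` D (es ! i) \<union> arbvars A) lam xi \<and> lam (Orig (es ! i));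
     \<exists>lam. base D phi A lam \<and> agree_on (Orig ` D (es ! i) \<union> arbvars A) lam xi \<and> \<not> lam (Orig (es ! i)) \<rbrakk>
   \<Longrightarrow> phase1 es D phi i (insert (es ! i, {u \<in> D (es ! i). xi (Orig u)}) A) ds"
| definition_step: "\<lbrakk> phase1 es D phi i A ds; i < length es;
     is_definition psi (Orig (es ! i)) (Orig ` D (es ! i) \<union> arbvars A) (base D phi A) \<rbrakk>
   \<Longrightarrow> phase1 es D phi (Suc i) A (ds @ [psi])"

definition psi_def :: "'v list \<Rightarrow> (('v avar \<Rightarrow> bool) \<Rightarrow> bool) list \<Rightarrow> ('v avar \<Rightarrow> bool) \<Rightarrow> bool" where
  "psi_def es ds lam \<longleftrightarrow> (\<forall>j<length es. lam (Orig (es ! j)) = (ds ! j) lam)"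

definition assign_lits :: "'x set \<Rightarrow> ('x \<Rightarrow> bool) \<Rightarrow> 'x lit set" where
  "assign_lits X tau = (\<lambda>x. (x, tau x)) ` X"

definition neg_restr :: "'x set \<Rightarrow> 'x lit set \<Rightarrow> 'x clause" where
  "neg_restr X rho = (\<lambda>(x, b). (x, \<not> b)) ` {l \<in> rho. fst l \<in> X}"

text \<open>One iteration of Phase 2 from the current tau, choosing sigma and rho, yields
  the new clause added to C.\<close>
definition phase2_clause :: "'v list \<Rightarrow> 'v list \<Rightarrow> ('v \<Rightarrow> 'v set) \<Rightarrow> 'v cnf \<Rightarrow> ('v \<times> 'v set) set
    \<Rightarrow> (('v avar \<Rightarrow> bool) \<Rightarrow> bool) list \<Rightarrow> ('v avar \<Rightarrow> bool) \<Rightarrow> 'v avar clause \<Rightarrow> bool" where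
  "phase2_clause us es D phi A ds tau cl \<longleftrightarrow>
     (\<exists>sigma rho.
        \<not> cnf_sat sigma (lift_cnf phi) \<and> psi_def es ds sigma \<and> agree_on (arbvars A) sigma tau \<and>
        rho \<subseteq> assign_lits (arbvars A) tau \<union> assign_lits (Orig ` set us) sigma \<and>
        \<not> (\<exists>lam. base D phi A lam \<and> (\<forall>l\<in>rho. lit_sat lam l)) \<and>
        cl = neg_restr (arbvars A) rho)"

inductive phase2 :: "'v list \<Rightarrow> 'v list \<Rightarrow> ('v \<Rightarrow> 'v set) \<Rightarrow> 'v cnf \<Rightarrow> ('v \<times> 'v set) set
    \<Rightarrow> (('v avar \<Rightarrow> bool) \<Rightarrow> bool) list \<Rightarrow> ('v avar \<Rightarrow> bool) \<Rightarrow> 'v avar cnf \<Rightarrow> bool"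
  for us es D phi A ds where
  init: "phase2 us es D phi A ds (\<lambda>_. True) {}"
| step: "\<lbrakk> phase2 us es D phi A ds tau C; phase2_clause us es D phi A ds tau cl;
     cnf_sat tau' (insert cl C) \<rbrakk> \<Longrightarrow> phase2 us es D phi A ds tau' (insert cl C)"

text \<open>Some run of Algorithm 1 (with some admissible choices) returns FALSE.\<close>
definition alg1_returns_false :: "'v list \<Rightarrow> 'v list \<Rightarrow> ('v \<Rightarrow> 'v set) \<Rightarrow> 'v cnf \<Rightarrow> bool" where
  "alg1_returns_false us es D phi \<longleftrightarrow>
     (\<exists>A ds tau C cl. phase1 es D phi (length es) A ds \<and> phase2 us es D phi A ds tau C \<and>
        phase2_clause us es D phi A ds tau cl \<and> \<not> (\<exists>tau'. cnf_sat tau' (insert cl C)))"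

end

theory Submission
  imports Defs
begin

text \<open>A model f of the DQBF fixes a value f e S for every arbiter variable e^S, and for
  each universal assignment S it extends to an assignment of all variables that satisfies
  phi and every arbiter definition. Hence a core rho of phi \<and> phi_A \<and> rho that agrees with
  some universal assignment is violated only by its arbiter literals, so every clause
  learned in Phase 2 holds under the arbiter values of f. A run returning FALSE
  produces an unsatisfiable set of learned clauses, so no model exists.\<close>

lemma cnf_sat_lift_cnf:
  "cnf_sat lam (lift_cnf phi) \<longleftrightarrow> cnf_sat (\<lambda>x. lam (Orig x)) phi"
  unfolding cnf_sat_def clause_sat_def lift_cnf_def lit_sat_def by (auto simp: split_def)

lemma clause_sat_neg_assign:
  "\<not> clause_sat lam (neg_assign V S) \<longleftrightarrow> (\<forall>u\<in>V. lam (Orig u) = (u \<in> S))"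
  unfolding clause_sat_def neg_assign_def lit_sat_def by auto

lemma cnf_sat_arbiter_clauses:
  "cnf_sat lam (arbiter_clauses D e S) \<longleftrightarrow>
     ((\<forall>u\<in>D e. lam (Orig u) = (u \<in> S)) \<longrightarrow> lam (Arb e S) = lam (Orig e))"
proof -
  have "cnf_sat lam (arbiter_clauses D e S) \<longleftrightarrow>
      clause_sat lam (neg_assign (D e) S) \<or> lam (Arb e S) = lam (Orig e)"
    unfolding arbiter_clauses_def cnf_sat_def clause_sat_def lit_sat_def by auto
  then show ?thesis
    using clause_sat_neg_assign[of lam "D e" S] by blast
qed

lemma cnf_sat_phi_A:
  "cnf_sat lam (phi_A D A) \<longleftrightarrow> (\<forall>(e, S)\<in>A. cnf_sat lam (arbiter_clauses D e S))"
  unfolding phi_A_def cnf_sat_def by auto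

lemma phase1_arbiters:
  "phase1 es D phi i A ds \<Longrightarrow> \<forall>(e, S)\<in>A. e \<in> set es \<and> S \<subseteq> D e"
  by (induction rule: phase1.induct) auto

definition model_extension ::
    "'v list \<Rightarrow> ('v \<Rightarrow> 'v set) \<Rightarrow> ('v \<Rightarrow> 'v set \<Rightarrow> bool) \<Rightarrow> 'v set \<Rightarrow> 'v avar \<Rightarrow> bool" where
  "model_extension us D f S v =
     (case v of Orig x \<Rightarrow> if x \<in> set us then x \<in> S else f x (S \<inter> D x) | Arb e S' \<Rightarrow> f e S')"

lemma model_extension_base:
  assumes wf: "dqbf_wf us es D phi"
    and model: "is_model us es D phi f"
    and S: "S \<subseteq> set us"
    and arbiters: "\<forall>(e, S')\<in>A. e \<in> set es \<and> S' \<subseteq> D e"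
  shows "base D phi A (model_extension us D f S)"
proof -
  let ?lam = "model_extension us D f S"
  have "cnf_sat ?lam (lift_cnf phi)"
    using model S unfolding cnf_sat_lift_cnf is_model_def model_extension_def by simp
  moreover have "cnf_sat ?lam (arbiter_clauses D e S')" if "(e, S') \<in> A" for e S'
  proof -
    have e: "e \<in> set es" "e \<notin> set us" and sub: "S' \<subseteq> D e" "D e \<subseteq> set us"
      using that arbiters wf unfolding dqbf_wf_def by auto
    have universal: "?lam (Orig u) = (u \<in> S)" if "u \<in> D e" for u
      using that sub unfolding model_extension_def by auto
    have "?lam (Arb e S') = ?lam (Orig e)" if "\<forall>u\<in>D e. ?lam (Orig u) = (u \<in> S')"
    proof -
      have "S \<inter> D e = S'"
        using that universal sub by auto
      then show ?thesis
        using e unfolding model_extension_def by simp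
    qed
    then show ?thesis
      unfolding cnf_sat_arbiter_clauses by blast
  qed
  then have "cnf_sat ?lam (phi_A D A)"
    unfolding cnf_sat_phi_A by auto
  ultimately show ?thesis
    unfolding base_def by blast
qed

lemma learned_clause_sat:
  assumes wf: "dqbf_wf us es D phi"
    and model: "is_model us es D phi f"
    and arbiters: "\<forall>(e, S)\<in>A. e \<in> set es \<and> S \<subseteq> D e"
    and learned: "phase2_clause us es D phi A ds tau cl"
    and arbiter_values: "\<And>e S. lam (Arb e S) = f e S"
  shows "clause_sat lam cl"
proof -
  obtain sigma rho where
    rho: "rho \<subseteq> assign_lits (arbvars A) tau \<union> assign_lits (Orig ` set us) sigma"
    and core: "\<not> (\<exists>lam. base D phi A lam \<and> (\<forall>l\<in>rho. lit_sat lam l))"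
    and cl: "cl = neg_restr (arbvars A) rho"
    using learned unfolding phase2_clause_def by blast
  define S where "S = {u \<in> set us. sigma (Orig u)}"
  let ?lam = "model_extension us D f S"
  have "S \<subseteq> set us"
    unfolding S_def by blast
  then have "base D phi A ?lam"
    using model_extension_base[OF wf model _ arbiters] by blast
  then obtain l where l: "l \<in> rho" and false: "\<not> lit_sat ?lam l"
    using core by blast
  have "fst l \<in> arbvars A"
  proof (rule ccontr)
    assume "fst l \<notin> arbvars A"
    then obtain u where "u \<in> set us" "l = (Orig u, sigma (Orig u))"
      using l rho unfolding assign_lits_def by auto
    then show False
      using false unfolding lit_sat_def model_extension_def S_def by simp
  qed
  then obtain e S' where arb: "fst l = Arb e S'"
    unfolding arbvars_def by auto
  have "(fst l, \<not> snd l) \<in> cl"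
    using l \<open>fst l \<in> arbvars A\<close> unfolding cl neg_restr_def by force
  moreover have "lit_sat lam (fst l, \<not> snd l)"
    using false arb arbiter_values unfolding lit_sat_def model_extension_def by simp
  ultimately show ?thesis
    unfolding clause_sat_def by blast
qed

lemma phase2_learned_clauses_sat:
  assumes "phase2 us es D phi A ds tau C"
    and "dqbf_wf us es D phi"
    and "is_model us es D phi f"
    and "\<forall>(e, S)\<in>A. e \<in> set es \<and> S \<subseteq> D e"
    and "\<And>e S. lam (Arb e S) = f e S"
  shows "cnf_sat lam C"
  using assms(1)
proof (induction rule: phase2.induct)
  case init
  then show ?case
    unfolding cnf_sat_def by simp
next
  case (step tau C cl tau')
  then show ?case
    using learned_clause_sat[OF assms(2-4) _ assms(5)] unfolding cnf_sat_def by blast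
qed

theorem theorem2:
  fixes us es :: "'v list" and D :: "'v \<Rightarrow> 'v set" and phi :: "'v cnf"
  assumes "dqbf_wf us es D phi"
    and "alg1_returns_false us es D phi"
  shows "\<not> dqbf_true us es D phi"
proof
  assume "dqbf_true us es D phi"
  then obtain f where model: "is_model us es D phi f"
    unfolding dqbf_true_def by blast
  obtain A ds tau C cl where
    p1: "phase1 es D phi (length es) A ds" and p2: "phase2 us es D phi A ds tau C"
    and learned: "phase2_clause us es D phi A ds tau cl"
    and unsat: "\<not> (\<exists>tau'. cnf_sat tau' (insert cl C))"
    using assms(2) unfolding alg1_returns_false_def by blast
  let ?lam = "model_extension us D f {}"
  have arbiters: "\<forall>(e, S)\<in>A. e \<in> set es \<and> S \<subseteq> D e"
    using phase1_arbiters[OF p1] .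
  have arbiter_values: "\<And>e S. ?lam (Arb e S) = f e S"
    unfolding model_extension_def by simp
  have "cnf_sat ?lam C"
    using phase2_learned_clauses_sat[OF p2 assms(1) model arbiters arbiter_values] .
  moreover have "clause_sat ?lam cl"
    using learned_clause_sat[OF assms(1) model arbiters learned arbiter_values] .
  ultimately show False
    using unsat unfolding cnf_sat_def by blast
qed

end
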